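(* For every complex number $a$ of modulus one, there is no $6\times 6$ complex Hadamard matrix all of whose entries lie in $\{1,a,-a^2\}$.
   Context: A complex Hadamard matrix (CHM) of order $n$ is an $n\times n$ complex matrix $H$ all of whose entries have modulus one and which satisfies $HH^\dagger=nI$. *)

theory Defs
  imports Complex_Main
begin

text \<open>An n x n complex matrix is represented as a function H :: nat => nat => complex,
  with entries H i j for i, j < n.\<close>

definition complex_hadamard :: "nat \<Rightarrow> (nat \<Rightarrow> nat \<Rightarrow> complex) \<Rightarrow> bool" where
  "complex_hadamard n H \<longleftrightarrow>
     (\<forall>i<n. \<forall>j<n. norm (H i j) = 1) \<and>
     (\<forall>i<n. \<forall>j<n. (\<Sum>k<n. H i k * cnj (H j k)) = (if i = j then of_nat n else 0))"

end

theory Submission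
  imports Defs
begin

text \<open>Write \<open>u = Re a\<close>. Multiplying the matrix by \<open>-a\<^sup>-\<^sup>2\<close> replaces \<open>a\<close> by
  \<open>-a\<^sup>-\<^sup>1\<close>, so we may assume \<open>u \<ge> 0\<close>. If \<open>u = 1\<close> the matrix is a real Hadamard matrix
  of order 6, impossible since 4 does not divide 6. If \<open>u < 2/3\<close>, every column sum \<open>m\<^sub>0 + m\<^sub>1 a - m\<^sub>2 a\<^sup>2\<close>
  has squared modulus greater than 6, whereas these squares add up to \<open>6\<^sup>2\<close>. If \<open>2/3 \<le> u < 1\<close>,
  let \<open>P, Q, B\<close> count the positions where two rows carry the symbol pairs \<open>{1, a}\<close>,
  \<open>{a, -a\<^sup>2}\<close>, \<open>{1, -a\<^sup>2}\<close>; orthogonality reads \<open>(1 - u) P + (1 + u) Q + 2u\<^sup>2 B = 6\<close>, and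
  integrality forces \<open>P + 3Q + 3B \<ge> 12\<close>. Summed over the 30 ordered pairs of rows this gives
  at least 360, while counted column by column it is at most \<open>6 \<cdot> 58 = 348\<close>.\<close>

lemma complex_hadamard_cong:
  assumes "complex_hadamard n H" and "\<And>i j. i < n \<Longrightarrow> j < n \<Longrightarrow> G i j = H i j"
  shows "complex_hadamard n G"
proof -
  have "(\<Sum>k<n. G i k * cnj (G j k)) = (\<Sum>k<n. H i k * cnj (H j k))" if "i < n" "j < n" for i j
    using that assms(2) by (intro sum.cong) auto
  with assms show ?thesis by (simp add: complex_hadamard_def)
qed

lemma complex_hadamard_scale:
  assumes "complex_hadamard n H" and "norm c = 1"
  shows "complex_hadamard n (\<lambda>i j. c * H i j)"
proof -
  have "c * cnj c = 1" using assms(2) by (simp add: complex_norm_square[symmetric])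
  then have "(\<Sum>k<n. c * H i k * cnj (c * H j k)) = (\<Sum>k<n. H i k * cnj (H j k))" for i j
    by (intro sum.cong) (simp_all add: algebra_simps)
  with assms show ?thesis by (simp add: complex_hadamard_def norm_mult)
qed

lemma complex_hadamard_column_sums:
  assumes "complex_hadamard n H"
  shows "(\<Sum>k<n. (cmod (\<Sum>i<n. H i k))^2) = (real n)^2"
proof -
  have "complex_of_real (\<Sum>k<n. (cmod (\<Sum>i<n. H i k))^2)
      = (\<Sum>k<n. (\<Sum>i<n. H i k) * cnj (\<Sum>j<n. H j k))"
    unfolding of_real_sum by (intro sum.cong refl) (simp only: complex_norm_square)
  also have "\<dots> = (\<Sum>k<n. \<Sum>i<n. \<Sum>j<n. H i k * cnj (H j k))"
    by (simp add: cnj_sum sum_product)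
  also have "\<dots> = (\<Sum>i<n. \<Sum>k<n. \<Sum>j<n. H i k * cnj (H j k))"
    by (rule sum.swap)
  also have "\<dots> = (\<Sum>i<n. \<Sum>j<n. \<Sum>k<n. H i k * cnj (H j k))"
    by (intro sum.cong refl sum.swap)
  also have "\<dots> = (\<Sum>i<n. \<Sum>j<n. if i = j then of_nat n else 0)"
    using assms by (simp add: complex_hadamard_def)
  also have "\<dots> = complex_of_real ((real n)^2)"
    by (simp add: power2_eq_square)
  finally show ?thesis by (simp only: of_real_eq_iff)
qed

text \<open>Rows 0, 1, 2 of a real Hadamard matrix: \<open>(h\<^sub>0 + h\<^sub>1) \<bullet> (h\<^sub>0 + h\<^sub>2) = n\<close>, and each
  coordinate contributes 0 or 4.\<close>
lemma complex_hadamard_pm1_four_dvd: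
  assumes H: "complex_hadamard n H" and "3 \<le> n"
    and pm1: "\<And>i j. i < n \<Longrightarrow> j < n \<Longrightarrow> H i j \<in> {1, -1}"
  shows "4 dvd n"
proof -
  have orth: "(\<Sum>k<n. H i k * cnj (H j k)) = (if i = j then of_nat n else 0)" if "i < n" "j < n" for i j
    using H that by (simp add: complex_hadamard_def)
  define T where "T k = (H 0 k + H 1 k) * cnj (H 0 k + H 2 k)" for k
  have "(\<Sum>k<n. T k) = (\<Sum>k<n. H 0 k * cnj (H 0 k)) + (\<Sum>k<n. H 0 k * cnj (H 2 k))
       + (\<Sum>k<n. H 1 k * cnj (H 0 k)) + (\<Sum>k<n. H 1 k * cnj (H 2 k))"
    by (simp add: T_def sum.distrib algebra_simps)
  also have "\<dots> = of_nat n" using \<open>3 \<le> n\<close> by (simp add: orth)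
  finally have sum_T: "(\<Sum>k<n. T k) = of_nat n" .
  have "T k = of_nat (4 * of_bool (H 1 k = H 0 k \<and> H 2 k = H 0 k))" if "k < n" for k
  proof -
    have "H 0 k \<in> {1, -1}" "H 1 k \<in> {1, -1}" "H 2 k \<in> {1, -1}"
      using pm1 that \<open>3 \<le> n\<close> by simp_all
    then show ?thesis by (simp add: T_def) (elim disjE; simp)
  qed
  then have "(\<Sum>k<n. T k) = (\<Sum>k<n. of_nat (4 * of_bool (H 1 k = H 0 k \<and> H 2 k = H 0 k)))"
    by (intro sum.cong) auto
  with sum_T have "(of_nat n :: complex) = of_nat (\<Sum>k<n. 4 * of_bool (H 1 k = H 0 k \<and> H 2 k = H 0 k))"
    by (simp only: of_nat_sum)
  then have "n = (\<Sum>k<n. 4 * of_bool (H 1 k = H 0 k \<and> H 2 k = H 0 k))"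
    by (simp only: of_nat_eq_iff)
  then have "n = 4 * (\<Sum>k<n. of_bool (H 1 k = H 0 k \<and> H 2 k = H 0 k))"
    by (simp only: sum_distrib_left)
  then show ?thesis by (metis dvd_triv_left)
qed

definition symbol :: "complex \<Rightarrow> nat \<Rightarrow> complex" where
  "symbol a e = (if e = 0 then 1 else if e = 1 then a else - (a^2))"

definition symbol_code :: "complex \<Rightarrow> complex \<Rightarrow> nat" where
  "symbol_code a z = (if z = 1 then 0 else if z = a then 1 else 2)"

lemma symbol_code_less: "symbol_code a z < 3"
  by (simp add: symbol_code_def)

lemma symbol_symbol_code: "z \<in> {1, a, - (a^2)} \<Longrightarrow> symbol a (symbol_code a z) = z"
  by (auto simp: symbol_def symbol_code_def)

text \<open>Multiplying by \<open>-a\<^sup>-\<^sup>2\<close> maps the alphabet of \<open>a\<close> onto that of \<open>-a\<^sup>-\<^sup>1\<close>, whose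
  real part is \<open>-Re a\<close>.\<close>
lemma alphabet_reflect:
  assumes "norm a = 1" "z \<in> {1, a, - (a^2)}"
  shows "- ((cnj a)^2) * z \<in> {1, - cnj a, - ((- cnj a)^2)}"
proof -
  have "cnj a * a = 1"
    using assms(1) by (simp add: complex_norm_square[symmetric] mult.commute)
  then have "- ((cnj a)^2) * a = - cnj a" "- ((cnj a)^2) * - (a^2) = 1"
    by (simp_all add: power2_eq_square algebra_simps)
  with assms(2) show ?thesis by auto
qed

definition code_count :: "nat \<Rightarrow> (nat \<Rightarrow> nat) \<Rightarrow> nat \<Rightarrow> nat" where
  "code_count n x e = (\<Sum>i<n. of_bool (x i = e))"

definition pair_count :: "nat \<Rightarrow> (nat \<Rightarrow> nat) \<Rightarrow> (nat \<Rightarrow> nat) \<Rightarrow> nat \<Rightarrow> nat \<Rightarrow> nat" where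
  "pair_count n x y e f = (\<Sum>k<n. of_bool (x k = e \<and> y k = f \<or> x k = f \<and> y k = e))"

lemma code_count_total:
  assumes "\<And>i. i < n \<Longrightarrow> x i < 3"
  shows "code_count n x 0 + code_count n x 1 + code_count n x 2 = n"
proof -
  have "of_bool (x i = 0) + of_bool (x i = 1) + of_bool (x i = 2) = (1::nat)" if "i < n" for i
    using assms[OF that] by (auto simp: less_Suc_eq numeral_3_eq_3)
  then have "(\<Sum>i<n. of_bool (x i = 0) + of_bool (x i = 1) + of_bool (x i = (2::nat))) = (\<Sum>i<n. 1::nat)"
    by (intro sum.cong) auto
  then show ?thesis by (simp add: code_count_def sum.distrib)
qed

lemma pair_count_total_le:
  "pair_count n x y 0 1 + pair_count n x y 1 2 + pair_count n x y 0 2 \<le> n"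
proof -
  have "(\<Sum>k<n. of_bool (x k = 0 \<and> y k = 1 \<or> x k = 1 \<and> y k = 0)
      + of_bool (x k = 1 \<and> y k = 2 \<or> x k = 2 \<and> y k = 1)
      + of_bool (x k = 0 \<and> y k = 2 \<or> x k = 2 \<and> y k = 0)) \<le> (\<Sum>k<n. 1::nat)"
    by (intro sum_mono) auto
  then show ?thesis by (simp add: pair_count_def sum.distrib)
qed

lemma sum_symbol:
  assumes "\<And>i. i < n \<Longrightarrow> x i < 3"
  shows "(\<Sum>i<n. symbol a (x i))
    = of_nat (code_count n x 0) + of_nat (code_count n x 1) * a - of_nat (code_count n x 2) * a^2"
proof -
  have "symbol a (x i) = of_bool (x i = 0) + of_bool (x i = 1) * a - of_bool (x i = 2) * a^2"
    if "i < n" for i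
    using assms[OF that] by (auto simp: symbol_def less_Suc_eq numeral_3_eq_3)
  then have "(\<Sum>i<n. symbol a (x i))
      = (\<Sum>i<n. of_bool (x i = 0) + of_bool (x i = 1) * a - of_bool (x i = 2) * a^2)"
    by (intro sum.cong) auto
  then show ?thesis
    by (simp add: code_count_def sum.distrib sum_subtractf sum_distrib_right)
qed

lemma Re_symbol_mult_cnj:
  assumes "norm a = 1" "x < 3" "y < 3"
  shows "Re (symbol a x * cnj (symbol a y)) = 1 -
    ((1 - Re a) * of_bool (x = 0 \<and> y = 1 \<or> x = 1 \<and> y = 0)
   + (1 + Re a) * of_bool (x = 1 \<and> y = 2 \<or> x = 2 \<and> y = 1)
   + 2 * (Re a)^2 * of_bool (x = 0 \<and> y = 2 \<or> x = 2 \<and> y = 0))"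
proof -
  have "(Re a)^2 + (Im a)^2 = 1"
    using assms(1) by (simp add: cmod_power2[symmetric])
  then have "Im a * Im a = 1 - Re a * Re a"
    by (simp add: power2_eq_square)
  then have Im_sq: "Im a * (Im a * w) = (1 - Re a * Re a) * w" for w
    by (simp add: mult.assoc[symmetric])
  from assms(2,3) have "x \<in> {0, 1, 2}" "y \<in> {0, 1, 2}" by auto
  then show ?thesis
    using Im_sq[of 1] by (auto simp: symbol_def power2_eq_square algebra_simps Im_sq)
qed

lemma Re_sum_symbol_mult_cnj:
  assumes "norm a = 1" "\<And>k. k < n \<Longrightarrow> x k < 3 \<and> y k < 3"
  shows "Re (\<Sum>k<n. symbol a (x k) * cnj (symbol a (y k))) = n -
    ((1 - Re a) * pair_count n x y 0 1 + (1 + Re a) * pair_count n x y 1 2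
   + 2 * (Re a)^2 * pair_count n x y 0 2)"
proof -
  have "Re (\<Sum>k<n. symbol a (x k) * cnj (symbol a (y k)))
      = (\<Sum>k<n. 1 - ((1 - Re a) * of_bool (x k = 0 \<and> y k = 1 \<or> x k = 1 \<and> y k = 0)
          + (1 + Re a) * of_bool (x k = 1 \<and> y k = 2 \<or> x k = 2 \<and> y k = 1)
          + 2 * (Re a)^2 * of_bool (x k = 0 \<and> y k = 2 \<or> x k = 2 \<and> y k = 0)))"
    unfolding Re_sum using assms by (intro sum.cong refl Re_symbol_mult_cnj) auto
  then show ?thesis
    by (simp add: pair_count_def sum_subtractf sum.distrib sum_distrib_left of_nat_sum
        del: of_bool_or_iff Re_sum)
qed

lemma sum_pair_count_rows:
  assumes "e \<noteq> f"
  shows "(\<Sum>i<m. \<Sum>j<m. pair_count n (t i) (t j) e f)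
    = (\<Sum>k<n. 2 * (code_count m (\<lambda>i. t i k) e * code_count m (\<lambda>i. t i k) f))"
proof -
  have split: "of_bool (x = e \<and> y = f \<or> x = f \<and> y = e)
      = of_bool (x = e) * of_bool (y = f) + of_bool (x = f) * (of_bool (y = e) :: nat)" for x y
    using assms by auto
  have "(\<Sum>i<m. \<Sum>j<m. pair_count n (t i) (t j) e f)
      = (\<Sum>k<n. \<Sum>i<m. \<Sum>j<m. of_bool (t i k = e \<and> t j k = f \<or> t i k = f \<and> t j k = e))"
    unfolding pair_count_def
    by (subst sum.swap, intro sum.cong refl sum.swap)
  also have "\<dots> = (\<Sum>k<n. 2 * (code_count m (\<lambda>i. t i k) e * code_count m (\<lambda>i. t i k) f))"
    unfolding split code_count_def sum.distrib sum_product[symmetric]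
    by (simp only: sum.distrib[symmetric] mult_2 mult.commute)
  finally show ?thesis .
qed

text \<open>On \<open>[2/3, 1]\<close> the chord bound \<open>u\<^sup>2 \<le> (5u - 2)/3\<close> makes the equation linear in \<open>u\<close>;
  the finitely many count triples with \<open>P + 3Q + 3B \<le> 11\<close> then each violate it.\<close>
lemma pair_counts_weight_ge:
  fixes P Q B :: nat and u :: real
  assumes "P + Q + B \<le> 6" "2/3 \<le> u" "u < 1"
    and "(1 - u) * P + (1 + u) * Q + 2 * u^2 * B = 6"
  shows "12 \<le> P + 3 * Q + 3 * B"
proof (rule ccontr)
  assume "\<not> ?thesis"
  then have small: "P + 3 * Q + 3 * B \<le> 11" by simp
  have "(u - 2/3) * (u - 1) \<le> 0"
    using assms(2,3) by (intro mult_nonneg_nonpos) auto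
  then have chord: "u * u \<le> (5 * u - 2) / 3"
    by (simp add: field_simps)
  have "P \<in> {0, 1, 2, 3, 4, 5, 6}" "Q \<in> {0, 1, 2, 3}" "B \<in> {0, 1, 2, 3}"
    using assms(1) small by auto
  then show False
    using small assms chord by (auto simp: power2_eq_square)
qed

lemma column_counts_weight_le:
  fixes m0 m1 m2 :: nat
  assumes "m0 + m1 + m2 = 6"
  shows "m0 * m1 + 3 * (m1 * m2) + 3 * (m0 * m2) \<le> 29"
proof -
  have "m0 \<in> {0, 1, 2, 3, 4, 5, 6}" "m1 \<in> {0, 1, 2, 3, 4, 5, 6}" "m2 = 6 - m0 - m1"
    using assms by auto
  then show ?thesis
    using assms by auto
qed

lemma norm_code_combination_gt:
  fixes m0 m1 m2 :: nat
  assumes "m0 + m1 + m2 = 6" "norm a = 1" "\<bar>Re a\<bar> < 2/3"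
  shows "6 < (cmod (of_nat m0 + of_nat m1 * a - of_nat m2 * a^2))^2"
proof -
  define u where "u = Re a"
  define z where "z = of_nat m0 + of_nat m1 * a - of_nat m2 * a^2"
  have Im_sq: "(Im a)^2 = 1 - u^2"
    using assms(2) cmod_power2[of a] by (simp add: u_def)
  have "a * cnj a = 1"
    using assms(2) by (simp add: complex_norm_square[symmetric])
  have "z * cnj a = of_nat m0 * cnj a + of_nat m1 * (a * cnj a) - of_nat m2 * a * (a * cnj a)"
    by (simp add: z_def power2_eq_square algebra_simps)
  also have "\<dots> = Complex (m1 + (real m0 - m2) * u) (- ((real m0 + m2) * Im a))"
    unfolding \<open>a * cnj a = 1\<close> by (simp add: complex_eq_iff u_def algebra_simps)
  finally have "(cmod (z * cnj a))^2 = (m1 + (real m0 - m2) * u)^2 + (real m0 + m2)^2 * (Im a)^2"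
    by (simp add: cmod_power2 power_mult_distrib)
  moreover have "cmod (z * cnj a) = cmod z"
    using assms(2) by (simp add: norm_mult)
  ultimately have "(cmod z)^2 = (m1 + (real m0 - m2) * u)^2 + (real m0 + m2)^2 * (1 - u^2)"
    by (simp add: Im_sq)
  also have "\<dots> = real m1 ^ 2 + (real m0 + m2)^2 + 2 * (real m0 - m2) * m1 * u - 4 * m0 * m2 * (u * u)"
    by (simp add: power2_eq_square algebra_simps)
  finally have "(cmod z)^2 = \<dots>" .
  moreover have "\<bar>u\<bar> * \<bar>u\<bar> < 2/3 * (2/3)"
    using assms(3) by (intro mult_strict_mono) (auto simp: u_def)
  then have "u * u < 4/9" "-2/3 < u" "u < 2/3"
    using assms(3) by (auto simp: u_def)
  moreover have "m0 \<in> {0, 1, 2, 3, 4, 5, 6}" "m1 \<in> {0, 1, 2, 3, 4, 5, 6}" "m2 = 6 - m0 - m1"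
    using assms(1) by auto
  ultimately show ?thesis
    unfolding z_def[symmetric] using assms(1) by (auto simp: power2_eq_square)
qed

lemma no_symbol_hadamard_6_small_Re:
  assumes "norm a = 1" "\<bar>Re a\<bar> < 2/3"
    and H: "complex_hadamard 6 (\<lambda>i j. symbol a (t i j))" and codes: "\<And>i j. t i j < 3"
  shows False
proof -
  have "6 < (cmod (\<Sum>i<6. symbol a (t i k)))^2" for k
  proof -
    let ?c = "code_count 6 (\<lambda>i. t i k)"
    have "?c 0 + ?c 1 + ?c 2 = 6" by (rule code_count_total) (rule codes)
    then show ?thesis
      unfolding sum_symbol[of 6 "\<lambda>i. t i k", OF codes] using assms(1,2)
      by (rule norm_code_combination_gt)
  qed
  then have "(\<Sum>k<6::nat. 6) < (\<Sum>k<6. (cmod (\<Sum>i<6. symbol a (t i k)))^2)"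
    by (intro sum_strict_mono) auto
  with complex_hadamard_column_sums[OF H] show False by simp
qed

lemma no_symbol_hadamard_6_large_Re:
  assumes "norm a = 1" "2/3 \<le> Re a" "Re a < 1"
    and H: "complex_hadamard 6 (\<lambda>i j. symbol a (t i j))" and codes: "\<And>i j. t i j < 3"
  shows False
proof -
  define w where "w x y = pair_count 6 x y 0 1 + 3 * pair_count 6 x y 1 2 + 3 * pair_count 6 x y 0 2"
    for x y
  have "12 \<le> w (t i) (t j)" if "i < 6" "j < 6" "i \<noteq> j" for i j
  proof -
    have "Re (\<Sum>k<6. symbol a (t i k) * cnj (symbol a (t j k))) = 0"
      using H that by (simp add: complex_hadamard_def)
    then have "(1 - Re a) * pair_count 6 (t i) (t j) 0 1 + (1 + Re a) * pair_count 6 (t i) (t j) 1 2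
        + 2 * (Re a)^2 * pair_count 6 (t i) (t j) 0 2 = 6"
      using Re_sum_symbol_mult_cnj[OF assms(1), of 6 "t i" "t j"] codes by simp
    with pair_count_total_le assms(2,3) show ?thesis
      unfolding w_def by (rule pair_counts_weight_ge)
  qed
  then have "(\<Sum>i<6::nat. \<Sum>j<6::nat. if i = j then 0 else 12) \<le> (\<Sum>i<6. \<Sum>j<6. w (t i) (t j))"
    by (intro sum_mono) auto
  also have "\<dots> = (\<Sum>k<6. 2 * (code_count 6 (\<lambda>i. t i k) 0 * code_count 6 (\<lambda>i. t i k) 1
      + 3 * (code_count 6 (\<lambda>i. t i k) 1 * code_count 6 (\<lambda>i. t i k) 2)
      + 3 * (code_count 6 (\<lambda>i. t i k) 0 * code_count 6 (\<lambda>i. t i k) 2)))"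
    by (simp add: w_def sum.distrib sum_pair_count_rows sum_distrib_left[symmetric] algebra_simps)
  also have "\<dots> \<le> (\<Sum>k<6::nat. 2 * 29)"
    by (intro sum_mono mult_left_mono column_counts_weight_le code_count_total codes) simp
  finally show False by (simp add: numeral_eq_Suc lessThan_Suc)
qed

lemma no_hadamard_6_Re_nonneg:
  assumes "norm a = 1" "0 \<le> Re a" and H: "complex_hadamard 6 H"
    and entries: "\<And>i j. i < 6 \<Longrightarrow> j < 6 \<Longrightarrow> H i j \<in> {1, a, - (a^2)}"
  shows False
proof -
  define t where "t i j = symbol_code a (H i j)" for i j
  have codes: "t i j < 3" for i j
    by (simp add: t_def symbol_code_less)
  have code_H: "complex_hadamard 6 (\<lambda>i j. symbol a (t i j))"
    using H by (rule complex_hadamard_cong) (simp add: t_def symbol_symbol_code[OF entries])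
  have "Re a \<le> 1"
    using abs_Re_le_cmod[of a] assms(1) by simp
  then consider "Re a < 2/3" | "2/3 \<le> Re a" "Re a < 1" | "Re a = 1"
    by linarith
  then show False
  proof cases
    case 1
    with assms(1,2) code_H codes show False by (intro no_symbol_hadamard_6_small_Re) auto
  next
    case 2
    with assms(1) show False by (rule no_symbol_hadamard_6_large_Re[OF _ _ _ code_H codes])
  next
    case 3
    with assms(1) have "a = 1"
      using cmod_power2[of a] by (simp add: complex_eq_iff)
    with entries have pm1: "H i j \<in> {1, -1}" if "i < 6" "j < 6" for i j
      using that by auto
    have "4 dvd (6::nat)"
      by (rule complex_hadamard_pm1_four_dvd[OF H _ pm1]) simp_all
    then show False by simp
  qed
qed

theorem mainTheorem11:
  fixes a :: complex
  assumes "norm a = 1"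
  shows "\<not> (\<exists>H. complex_hadamard 6 H \<and>
               (\<forall>i<6. \<forall>j<6. H i j \<in> {1, a, - (a ^ 2)}))"
proof
  assume "\<exists>H. complex_hadamard 6 H \<and> (\<forall>i<6. \<forall>j<6. H i j \<in> {1, a, - (a ^ 2)})"
  then obtain H where H: "complex_hadamard 6 H" and entries: "\<forall>i<6. \<forall>j<6. H i j \<in> {1, a, - (a ^ 2)}"
    by blast
  show False
  proof (cases "0 \<le> Re a")
    case True
    with assms H entries show False by (intro no_hadamard_6_Re_nonneg) auto
  next
    case False
    have G: "complex_hadamard 6 (\<lambda>i j. - ((cnj a)^2) * H i j)"
      using H by (rule complex_hadamard_scale) (simp add: assms norm_power)
    have G_entries: "- ((cnj a)^2) * H i j \<in> {1, - cnj a, - ((- cnj a)^2)}" if "i < 6" "j < 6" for i j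
      using assms entries that by (intro alphabet_reflect) auto
    show False
      by (rule no_hadamard_6_Re_nonneg[OF _ _ G G_entries]) (use False assms in auto)
  qed
qed

end
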